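(* For all $a,b\in\mathbb R$, each of the following systems has an isochronous center at the origin $O$ with zero Urabe function: (i) $\dot x=-y+axy+a^2x^2y+x^2-ax^3-a^2x^4$, $\dot y=x+3ay^2-2xy-ax^2+2a^2xy^2-4ax^2y+2x^3-2a^2x^3y+ax^4$; (ii) $\dot x=-y+axy+3a^2x^2y+x^2-ax^3-3a^2x^4$, $\dot y=x+4ay^2-2xy-\frac32ax^2+6a^2xy^2-6ax^2y+2x^3-6a^2x^3y+2ax^4$; (iii) with $K=a^2-\frac32ab+\frac12b^2$: $\dot x=-y+axy+Kx^2y+x^2-ax^3-Kx^4$, $\dot y=x+by^2-2xy+\frac{a-b}{2}x^2+2Kxy^2+2(a-b)x^2y+2x^3-2Kx^3y+(b-2a)x^4$.
   Context: For a real planar polynomial system $\dot x=-y+A(x,y)$, $\dot y=x+B(x,y)$, with $A,B$ polynomials having no terms of degree $<2$, the origin $O$ is an isochronous center if there is a punctured neighborhood of $O$ in which every orbit is a closed orbit surrounding $O$ and all these orbits have the same period. Zero Urabe function: write the system as $\dot x=p_0(x)+p_1(x)y$, $\dot y=q_0(x)+q_1(x)y+q_2(x)y^2$ ($p_0(0)=q_0(0)=0$, $p_1(0)\ne0$), where it holds that $-\frac{p_1'p_0}{p_1}+q_1+p_0'-\frac{2q_2p_0}{p_1}\equiv0$. Put $f=-\frac{q_2+p_1'}{p_1}$, $g=-\frac{q_2p_0^2}{p_1}+q_1p_0-p_1q_0$ (the change $z=p_0+p_1y$ gives $\dot x=z$, $\dot z=-g(x)-f(x)z^2$), $F(x)=\int_0^xf$,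 and $\xi$ near $0$ by $\frac12\xi(x)^2=\int_0^xg(s)e^{2F(s)}ds$, $x\xi(x)>0$ for $x\ne0$. The Urabe function of an isochronous center is the odd analytic $h$ with $\frac{\xi(x)}{1+h(\xi(x))}=g(x)e^{F(x)}$; "zero Urabe function" means $h\equiv0$, i.e. $\xi(x)=g(x)e^{F(x)}$ near $0$. *)

theory Defs
  imports "HOL-Analysis.Analysis" "HOL-Computational_Algebra.Polynomial"
begin

definition surrounds_origin :: "(real \<times> real) set \<Rightarrow> bool" where
  "surrounds_origin C \<longleftrightarrow> (0,0) \<notin> C \<and> bounded (connected_component_set (- C) (0,0))"

definition isochronous_center :: "(real \<times> real \<Rightarrow> real \<times> real) \<Rightarrow> bool" where
  "isochronous_center V \<longleftrightarrow>
     (\<exists>U T. open U \<and> (0,0) \<in> U \<and> T > 0 \<and>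
       (\<forall>p \<in> U - {(0,0)}. \<exists>\<phi> :: real \<Rightarrow> real \<times> real.
          \<phi> 0 = p \<and>
          (\<forall>t. (\<phi> has_vector_derivative V (\<phi> t)) (at t)) \<and>
          (\<forall>t. \<phi> (t + T) = \<phi> t) \<and>
          (\<forall>t. 0 < t \<and> t < T \<longrightarrow> \<phi> t \<noteq> p) \<and>
          surrounds_origin (\<phi> ` {0..T})))"

definition sint :: "(real \<Rightarrow> real) \<Rightarrow> real \<Rightarrow> real" where
  "sint h x = (if 0 \<le> x then integral {0..x} h else - integral {x..0} h)"

definition urabe_f :: "real poly \<Rightarrow> real poly \<Rightarrow> real \<Rightarrow> real" where
  "urabe_f p1 q2 x = - (poly q2 x + poly (pderiv p1) x) / poly p1 x"

definition urabe_g :: "real poly \<Rightarrow> real poly \<Rightarrow> real poly \<Rightarrow> real poly \<Rightarrow> real poly \<Rightarrow> real \<Rightarrow> real" where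
  "urabe_g p0 p1 q0 q1 q2 x =
     - poly q2 x * (poly p0 x)^2 / poly p1 x + poly q1 x * poly p0 x - poly p1 x * poly q0 x"

definition urabe_identity :: "real poly \<Rightarrow> real poly \<Rightarrow> real poly \<Rightarrow> real poly \<Rightarrow> real \<Rightarrow> real" where
  "urabe_identity p0 p1 q1 q2 x =
     - poly (pderiv p1) x * poly p0 x / poly p1 x + poly q1 x + poly (pderiv p0) x
     - 2 * poly q2 x * poly p0 x / poly p1 x"

text \<open>Zero Urabe function: near 0, the compatibility identity holds and the function
  xi defined by (1/2) xi(x)^2 = int_0^x g e^(2F), x xi(x) > 0 (x \<noteq> 0), equals g e^F;
  i.e. g e^F itself satisfies the defining properties of xi.\<close>
definition urabe_zero :: "real poly \<Rightarrow> real poly \<Rightarrow> real poly \<Rightarrow> real poly \<Rightarrow> real poly \<Rightarrow> bool" where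
  "urabe_zero p0 p1 q0 q1 q2 \<longleftrightarrow>
     (\<exists>\<delta>>0. \<forall>x. \<bar>x\<bar> < \<delta> \<longrightarrow>
        (let F = sint (urabe_f p1 q2);
             g = urabe_g p0 p1 q0 q1 q2;
             G = g x * exp (F x)
         in urabe_identity p0 p1 q1 q2 x = 0 \<and>
            G\<^sup>2 / 2 = sint (\<lambda>s. g s * exp (2 * F s)) x \<and>
            (x \<noteq> 0 \<longrightarrow> x * G > 0)))"

definition zero_urabe_system :: "(real \<times> real \<Rightarrow> real \<times> real) \<Rightarrow> bool" where
  "zero_urabe_system V \<longleftrightarrow>
     (\<exists>p0 p1 q0 q1 q2.
        V = (\<lambda>(x, y). (poly p0 x + poly p1 x * y,
                        poly q0 x + poly q1 x * y + poly q2 x * y^2)) \<and>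
        poly p0 0 = 0 \<and> poly q0 0 = 0 \<and> poly p1 0 \<noteq> 0 \<and>
        urabe_zero p0 p1 q0 q1 q2)"

end

theory Submission
  imports Defs
begin

(* Write the field as x' = p0 + p1 y, y' = q0 + q1 y + q2 y^2 and pass to
   z = p0 + p1 y, which gives x' = z, z' = -g - f z^2.  With F' = f and E = e^F
   put xi = g E and eta = z E.  If g' = 1 - g f, then xi' = E and a direct
   computation shows xi' = eta, eta' = -xi along solutions: the system is
   conjugate, near the origin, to the harmonic oscillator.  Hence all orbits near
   the origin are closed, surround it, and have period 2 pi; moreover xi = g e^F
   satisfies xi^2/2 = int_0^x g e^(2F), i.e. the Urabe function vanishes. *)

lemma sint_eq_integral_from:
  assumes cont: "continuous_on {-c..c} h" and x: "-c \<le> x" "x \<le> c"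
  shows "sint h x = integral {-c..x} h - integral {-c..0} h"
proof -
  have int: "h integrable_on {-c..c}" using cont integrable_continuous_interval by blast
  show ?thesis
  proof (cases "0 \<le> x")
    case True
    have "h integrable_on {-c..x}" using integrable_subinterval_real[OF int] x by auto
    then have "integral {-c..0} h + integral {0..x} h = integral {-c..x} h"
      by (rule Henstock_Kurzweil_Integration.integral_combine[rotated 2]) (use x True in auto)
    then show ?thesis using True by (simp add: sint_def)
  next
    case False
    have "h integrable_on {-c..0}" using integrable_subinterval_real[OF int] x False by auto
    then have "integral {-c..x} h + integral {x..0} h = integral {-c..0} h"
      by (rule Henstock_Kurzweil_Integration.integral_combine[rotated 2]) (use x False in auto)
    then show ?thesis using False by (simp add: sint_def)
  qed
qed

lemma sint_has_derivative:
  assumes cont: "continuous_on {-r<..<r} h" and x: "\<bar>x\<bar> < r"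
  shows "(sint h has_real_derivative h x) (at x)"
proof -
  define c where "c = (\<bar>x\<bar> + r) / 2"
  have xc: "\<bar>x\<bar> < c" "c < r" using x by (auto simp: c_def)
  have contc: "continuous_on {-c..c} h"
    by (rule continuous_on_subset[OF cont]) (use xc in auto)
  have "((\<lambda>y. integral {-c..y} h) has_real_derivative h x) (at x within {-c..c})"
    using integral_has_real_derivative[OF contc, of x] xc by (auto simp: abs_le_iff abs_less_iff)
  then have "((\<lambda>y. integral {-c..y} h - integral {-c..0} h) has_real_derivative h x) (at x)"
    using xc by (subst (asm) at_within_interior)
      (auto intro!: derivative_eq_intros simp: interior_atLeastAtMost_real)
  then show ?thesis
    by (rule has_field_derivative_transform_within_open[of _ _ _ "{-c<..<c}"])
       (use xc sint_eq_integral_from[OF contc] in auto)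
qed

lemma sint_fundamental:
  assumes D: "\<And>y. \<bar>y\<bar> \<le> \<bar>x\<bar> \<Longrightarrow> (D has_real_derivative h y) (at y)"
  shows "sint h x = D x - D 0"
proof -
  have vd: "(D has_vector_derivative h y) (at y within S)" if "\<bar>y\<bar> \<le> \<bar>x\<bar>" for y S
    using D[OF that] by (simp add: has_real_derivative_iff_has_vector_derivative has_vector_derivative_at_within)
  show ?thesis
  proof (cases "0 \<le> x")
    case True
    have "(h has_integral D x - D 0) {0..x}"
      by (rule fundamental_theorem_of_calculus) (use True vd in auto)
    then show ?thesis using True by (simp add: sint_def integral_unique)
  next
    case False
    have "(h has_integral D 0 - D x) {x..0}"
      by (rule fundamental_theorem_of_calculus) (use False vd in auto)
    then show ?thesis using False by (simp add: sint_def integral_unique)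
  qed
qed

(* The flow of the harmonic oscillator xi' = eta, eta' = -xi: clockwise rotation
   of the plane by the angle t. *)
definition rotation :: "real \<Rightarrow> real \<times> real \<Rightarrow> real \<times> real" where
  "rotation t w = (fst w * cos t + snd w * sin t, snd w * cos t - fst w * sin t)"

lemma power2_norm_prod: "(norm (w :: real \<times> real))\<^sup>2 = (fst w)\<^sup>2 + (snd w)\<^sup>2"
  by (cases w) (simp add: norm_Pair)

lemma rotation_zero [simp]: "rotation 0 w = w"
  by (simp add: rotation_def)

lemma rotation_periodic: "rotation (t + 2 * pi) w = rotation t w"
  by (simp add: rotation_def)

lemma rotation_add: "rotation s (rotation t w) = rotation (s + t) w"
  by (simp add: rotation_def cos_add sin_add algebra_simps)

lemma norm_rotation [simp]: "norm (rotation t w) = norm w"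
proof -
  have "(a * c + b * s)\<^sup>2 + (b * c - a * s)\<^sup>2 = (a\<^sup>2 + b\<^sup>2) * (s\<^sup>2 + c\<^sup>2)" for a b c s :: real
    by (simp add: power2_eq_square algebra_simps)
  then have "(norm (rotation t w))\<^sup>2 = (norm w)\<^sup>2"
    unfolding power2_norm_prod rotation_def by simp
  then show ?thesis by (simp add: power2_eq_iff_nonneg)
qed

lemma rotation_derivative:
  "((\<lambda>t. fst (rotation t w)) has_real_derivative snd (rotation t w)) (at t)"
  "((\<lambda>t. snd (rotation t w)) has_real_derivative - fst (rotation t w)) (at t)"
  unfolding rotation_def by (auto intro!: derivative_eq_intros)

lemma rotation_no_return:
  assumes "w \<noteq> 0" "0 < t" "t < 2 * pi"
  shows "rotation t w \<noteq> w"
proof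
  assume returns: "rotation t w = w"
  have "fst w * fst (rotation t w) + snd w * snd (rotation t w) = cos t * (norm w)\<^sup>2"
    unfolding power2_norm_prod by (simp add: rotation_def power2_eq_square algebra_simps)
  then have "cos t * (norm w)\<^sup>2 = 1 * (norm w)\<^sup>2"
    unfolding power2_norm_prod by (simp add: returns power2_eq_square)
  then have "cos t = 1" using assms(1) by simp
  then obtain n :: int where n: "t = of_int n * 2 * pi" by (auto simp: cos_one_2pi_int)
  then have "0 < n" "n < 1" using assms(2,3) by (auto simp: zero_less_mult_iff)
  then show False by simp
qed

lemma rotation_of_radius:
  obtains t where "0 \<le> t" "t < 2 * pi" "w = rotation t (norm w, 0)"
proof (cases "w = 0")
  case True
  then show ?thesis by (intro that[of 0]) (auto simp: zero_prod_def)
next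
  case False
  define r where "r = norm w"
  have r: "r > 0" using False by (simp add: r_def)
  have "(fst w / r)\<^sup>2 + (- snd w / r)\<^sup>2 = 1"
    using r by (simp add: power_divide add_divide_distrib[symmetric] power2_norm_prod[symmetric] r_def)
  then obtain t where t: "0 \<le> t" "t < 2 * pi" "fst w / r = cos t" "- snd w / r = sin t"
    using sincos_total_2pi by metis
  have "fst w = r * cos t" "snd w = - (r * sin t)"
    using t(3,4) r by (auto simp: field_simps)
  then have "w = rotation t (r, 0)" by (simp add: rotation_def prod_eq_iff)
  then show ?thesis using t by (intro that) (auto simp: r_def)
qed

lemma rotation_onto_circle:
  assumes "norm w = norm w0"
  obtains t where "t \<in> {0..2 * pi}" "rotation t w0 = w"
proof -
  obtain s where s: "0 \<le> s" "s < 2 * pi" "w0 = rotation s (norm w, 0)"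
    using rotation_of_radius[of w0] assms by metis
  obtain u where u: "0 \<le> u" "u < 2 * pi" "w = rotation u (norm w, 0)"
    using rotation_of_radius[of w] by metis
  have turn: "rotation (u - s) w0 = w" using s(3) u(3) by (simp add: rotation_add)
  show ?thesis
  proof (cases "s \<le> u")
    case True
    then show ?thesis using that[of "u - s"] turn s u by auto
  next
    case False
    then show ?thesis using that[of "u - s + 2 * pi"] turn s u by (auto simp: rotation_periodic)
  qed
qed

lemma abs_fst_le_norm: "\<bar>fst w\<bar> \<le> norm (w :: real \<times> real)"
  and abs_snd_le_norm: "\<bar>snd w\<bar> \<le> norm (w :: real \<times> real)"
  using norm_fst_le[of "fst w" "snd w"] norm_snd_le[of "snd w" "fst w"] by auto

(* A closed curve surrounds the origin as soon as it contains a whole level set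
   {h = r} of a continuous function h with h(0) < r and bounded sublevel set
   {h < r}: the component of the origin in the complement cannot cross the
   level r, hence stays inside the bounded sublevel set. *)
lemma surrounds_origin_of_level_set:
  fixes h :: "real \<times> real \<Rightarrow> real"
  assumes cont: "continuous_on UNIV h" and below: "h (0, 0) < r"
    and level: "{q. h q = r} \<subseteq> C" and origin: "(0, 0) \<notin> C"
    and sublevel: "bounded {q. h q < r}"
  shows "surrounds_origin C"
  unfolding surrounds_origin_def
proof (intro conjI origin bounded_subset[OF sublevel] subsetI CollectI)
  let ?K = "connected_component_set (- C) (0, 0)"
  fix q assume q: "q \<in> ?K"
  show "h q < r"
  proof (rule ccontr)
    assume "\<not> h q < r"
    have "connected (h ` ?K)"
      by (rule connected_continuous_image[OF continuous_on_subset[OF cont]]) auto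
    moreover have "h (0, 0) \<in> h ` ?K" using origin by auto
    moreover have "h q \<in> h ` ?K" using q by blast
    ultimately have "{h (0, 0)..h q} \<subseteq> h ` ?K" by (rule connected_contains_Icc)
    then have "r \<in> h ` ?K" using below \<open>\<not> h q < r\<close> by auto
    then obtain q' where "q' \<in> ?K" "h q' = r" by auto
    then show False using level connected_component_subset by blast
  qed
qed

(* The planar field
     x' = PA x + PB x y,   y' = QA x + QB x y + QC x y^2
   becomes, in the variable z = PA x + PB x y, the Lienard-type system
   x' = z, z' = - g x - f x z^2 (assumption reduction, an identity obtained from
   the chain rule z' = DPA x x' + DPB x x' y + PB x y').  E plays the role of
   exp F with F' = f, and the crucial hypothesis is (g E)' = E. *)
locale linearizing_coordinate =
  fixes PA PB QA QB QC DPA DPB f g E :: "real \<Rightarrow> real" and \<delta> :: real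
  assumes delta_pos: "0 < \<delta>"
    and PA_deriv: "\<And>x. \<bar>x\<bar> < \<delta> \<Longrightarrow> (PA has_real_derivative DPA x) (at x)"
    and PB_deriv: "\<And>x. \<bar>x\<bar> < \<delta> \<Longrightarrow> (PB has_real_derivative DPB x) (at x)"
    and PA_zero: "PA 0 = 0"
    and PB_nonzero: "\<And>x. \<bar>x\<bar> < \<delta> \<Longrightarrow> PB x \<noteq> 0"
    and g_zero: "g 0 = 0"
    and E_pos: "\<And>x. \<bar>x\<bar> < \<delta> \<Longrightarrow> 0 < E x"
    and E_deriv: "\<And>x. \<bar>x\<bar> < \<delta> \<Longrightarrow> (E has_real_derivative E x * f x) (at x)"
    and gE_deriv: "\<And>x. \<bar>x\<bar> < \<delta> \<Longrightarrow> ((\<lambda>x. g x * E x) has_real_derivative E x) (at x)"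
    and reduction: "\<And>x y. \<bar>x\<bar> < \<delta> \<Longrightarrow>
      DPA x * (PA x + PB x * y) + DPB x * (PA x + PB x * y) * y + PB x * (QA x + QB x * y + QC x * y\<^sup>2)
        = - g x - f x * (PA x + PB x * y)\<^sup>2"
begin

abbreviation system :: "real \<times> real \<Rightarrow> real \<times> real" where
  "system \<equiv> \<lambda>(x, y). (PA x + PB x * y, QA x + QB x * y + QC x * y\<^sup>2)"

definition xi :: "real \<Rightarrow> real" where
  "xi = (\<lambda>x. g x * E x)"

lemma xi_deriv: "\<bar>x\<bar> < \<delta> \<Longrightarrow> (xi has_real_derivative E x) (at x)"
  unfolding xi_def by (rule gE_deriv)

lemma xi_zero [simp]: "xi 0 = 0"
  by (simp add: xi_def g_zero)

lemma xi_less: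
  assumes "\<bar>u\<bar> < \<delta>" "\<bar>v\<bar> < \<delta>" "u < v"
  shows "xi u < xi v"
proof (rule DERIV_pos_imp_increasing[OF assms(3)])
  fix x assume "u \<le> x" "x \<le> v"
  then have "\<bar>x\<bar> < \<delta>" using assms by auto
  then show "\<exists>y. (xi has_real_derivative y) (at x) \<and> 0 < y" using xi_deriv E_pos by blast
qed

lemma xi_sign: "\<bar>x\<bar> < \<delta> \<Longrightarrow> x \<noteq> 0 \<Longrightarrow> 0 < x * xi x"
  using xi_less[of 0 x] xi_less[of x 0] delta_pos
  by (cases "0 < x") (auto simp: zero_less_mult_iff)

lemma xi_square_primitive:
  assumes "\<bar>x\<bar> < \<delta>"
  shows "sint (\<lambda>s. xi s * E s) x = (xi x)\<^sup>2 / 2"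
proof -
  have "sint (\<lambda>s. xi s * E s) x = (xi x)\<^sup>2 / 2 - (xi 0)\<^sup>2 / 2"
    by (rule sint_fundamental) (use assms in \<open>auto intro!: derivative_eq_intros xi_deriv\<close>)
  then show ?thesis by simp
qed

lemma isCont_data:
  assumes "\<bar>x\<bar> < \<delta>"
  shows "isCont xi x" "isCont E x" "isCont PA x" "isCont PB x"
  by (rule DERIV_isCont, rule xi_deriv E_deriv PA_deriv PB_deriv, rule assms)+

definition d :: real where "d = \<delta> / 2"

lemma d_pos: "0 < d" and d_less: "d < \<delta>"
  using delta_pos by (auto simp: d_def)

definition m :: real where "m = min (xi d) (- xi (- d))"

lemma m_pos: "0 < m"
  using xi_less[of 0 d] xi_less[of "-d" 0] d_pos d_less by (auto simp: m_def)

lemma m_le_xi: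
  assumes "\<bar>x\<bar> = d"
  shows "m \<le> \<bar>xi x\<bar>"
proof -
  have "x = d \<or> x = -d" using assms by auto
  then show ?thesis by (auto simp: m_def)
qed

definition xinv :: "real \<Rightarrow> real" where "xinv = inv_into {-d..d} xi"

lemma xinv_xi:
  assumes "\<bar>x\<bar> \<le> d"
  shows "xinv (xi x) = x"
proof -
  have "strict_mono_on {-d..d} xi"
    by (rule strict_mono_onI) (use xi_less d_less in simp)
  then have "inj_on xi {-d..d}" by (rule strict_mono_on_imp_inj_on)
  then show ?thesis unfolding xinv_def by (rule inv_into_f_f) (use assms in \<open>simp add: abs_le_iff\<close>)
qed

lemma xi_xinv:
  assumes "\<bar>w\<bar> < m"
  shows "xi (xinv w) = w" and "\<bar>xinv w\<bar> < d"
proof -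
  have "continuous_on {-d..d} xi"
    by (intro continuous_at_imp_continuous_on ballI isCont_data) (use d_less in auto)
  moreover have "xi (-d) \<le> w" "w \<le> xi d" using assms by (auto simp: m_def)
  ultimately obtain x where x: "-d \<le> x" "x \<le> d" "xi x = w"
    using IVT'[of xi "-d" w d] d_pos by auto
  moreover have "x \<noteq> d" "x \<noteq> -d" using x assms by (auto simp: m_def)
  ultimately show "xi (xinv w) = w" "\<bar>xinv w\<bar> < d" using xinv_xi[of x] by auto
qed

lemma xinv_deriv:
  assumes w: "\<bar>w\<bar> < m"
  shows "(xinv has_real_derivative inverse (E (xinv w))) (at w)"
proof (rule DERIV_inverse_function[where a="-m" and b=m])
  have small: "\<bar>xinv w\<bar> < \<delta>" using xi_xinv(2)[OF w] d_less by simp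
  then show "(xi has_real_derivative E (xinv w)) (at (xinv w))" "E (xinv w) \<noteq> 0"
    using xi_deriv E_pos by (auto simp: less_imp_neq[symmetric])
  show "-m < w" "w < m" using w by auto
  show "xi (xinv y) = y" if "-m < y" "y < m" for y using xi_xinv(1) that by auto
  have "isCont xinv (xi (xinv w))"
    by (rule isCont_inverse_function2[where a="-d" and b=d])
       (use xi_xinv(2)[OF w] xinv_xi isCont_data d_less in auto)
  then show "isCont xinv w" using xi_xinv(1)[OF w] by simp
qed

definition coord :: "real \<times> real \<Rightarrow> real \<times> real" where
  "coord q = (xi (fst q), (PA (fst q) + PB (fst q) * snd q) * E (fst q))"

definition uncoord :: "real \<times> real \<Rightarrow> real \<times> real" where
  "uncoord w = (xinv (fst w), (snd w / E (xinv (fst w)) - PA (xinv (fst w))) / PB (xinv (fst w)))"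

lemma uncoord_coord:
  assumes "\<bar>fst q\<bar> \<le> d"
  shows "uncoord (coord q) = q"
proof -
  have "\<bar>fst q\<bar> < \<delta>" using assms d_less by simp
  then have "E (fst q) \<noteq> 0" "PB (fst q) \<noteq> 0" using E_pos PB_nonzero by (auto simp: less_imp_neq[symmetric])
  then show ?thesis using xinv_xi[OF assms] by (simp add: coord_def uncoord_def prod_eq_iff)
qed

lemma coord_uncoord:
  assumes "\<bar>fst w\<bar> < m"
  shows "coord (uncoord w) = w"
proof -
  have "\<bar>xinv (fst w)\<bar> < \<delta>" using xi_xinv(2)[OF assms] d_less by simp
  then have "E (xinv (fst w)) \<noteq> 0" "PB (xinv (fst w)) \<noteq> 0"
    using E_pos PB_nonzero by (auto simp: less_imp_neq[symmetric])
  then show ?thesis using xi_xinv(1)[OF assms] by (simp add: coord_def uncoord_def prod_eq_iff)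
qed

lemma coord_origin [simp]: "coord (0, 0) = 0"
  by (simp add: coord_def PA_zero zero_prod_def)

lemma uncoord_origin [simp]: "uncoord 0 = (0, 0)"
  using uncoord_coord[of "(0, 0)"] d_pos by simp

lemma uncoord_trajectory:
  assumes du: "(u has_real_derivative v t) (at t)" and dv: "(v has_real_derivative - u t) (at t)"
    and small: "\<bar>u t\<bar> < m"
  shows "((\<lambda>s. uncoord (u s, v s)) has_vector_derivative system (uncoord (u t, v t))) (at t)"
proof -
  define X where "X = (\<lambda>s. xinv (u s))"
  define Z where "Z = (\<lambda>s. v s / E (X s))"
  define Y where "Y = (\<lambda>s. (Z s - PA (X s)) / PB (X s))"
  have Xt: "\<bar>X t\<bar> < \<delta>" "xi (X t) = u t" using xi_xinv[OF small] d_less by (auto simp: X_def)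
  have EX: "E (X t) > 0" and PBX: "PB (X t) \<noteq> 0" using E_pos PB_nonzero Xt by auto
  have ZY: "Z t = PA (X t) + PB (X t) * Y t" using PBX by (simp add: Y_def)
  have dX: "(X has_real_derivative Z t) (at t)"
    using DERIV_chain2[OF xinv_deriv[OF small] du] by (simp add: X_def Z_def field_simps)
  have "(Z has_real_derivative (- u t * E (X t) - v t * (E (X t) * f (X t) * Z t)) / (E (X t) * E (X t))) (at t)"
    unfolding Z_def by (rule DERIV_divide[OF dv DERIV_chain2[OF E_deriv[OF Xt(1)] dX[unfolded Z_def]]])
      (use EX in auto)
  moreover have "u t = g (X t) * E (X t)" using Xt(2) by (simp add: xi_def)
  ultimately have dZ: "(Z has_real_derivative - g (X t) - f (X t) * (Z t)\<^sup>2) (at t)"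
    using EX by (simp add: Z_def field_simps power2_eq_square)
  have "((- g (X t) - f (X t) * (Z t)\<^sup>2 - DPA (X t) * Z t) * PB (X t)
          - (Z t - PA (X t)) * (DPB (X t) * Z t)) / (PB (X t) * PB (X t))
      = QA (X t) + QB (X t) * Y t + QC (X t) * (Y t)\<^sup>2"
  proof -
    have gX: "g (X t) = - f (X t) * (Z t)\<^sup>2 - DPA (X t) * Z t - DPB (X t) * Z t * Y t
        - PB (X t) * (QA (X t) + QB (X t) * Y t + QC (X t) * (Y t)\<^sup>2)"
      using reduction[OF Xt(1), of "Y t"] unfolding ZY[symmetric] by simp
    show ?thesis unfolding gX using PBX by (simp add: ZY field_simps power2_eq_square)
  qed
  moreover have "(Y has_real_derivative ((- g (X t) - f (X t) * (Z t)\<^sup>2 - DPA (X t) * Z t) * PB (X t)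
          - (Z t - PA (X t)) * (DPB (X t) * Z t)) / (PB (X t) * PB (X t))) (at t)"
    unfolding Y_def
    by (intro DERIV_divide DERIV_diff dZ DERIV_chain2[OF PA_deriv[OF Xt(1)] dX]
        DERIV_chain2[OF PB_deriv[OF Xt(1)] dX] PBX)
  ultimately have dY: "(Y has_real_derivative QA (X t) + QB (X t) * Y t + QC (X t) * (Y t)\<^sup>2) (at t)"
    by simp
  have traj: "(\<lambda>s. uncoord (u s, v s)) = (\<lambda>s. (X s, Y s))"
    by (simp add: uncoord_def X_def Y_def Z_def)
  have "((\<lambda>s. (X s, Y s)) has_vector_derivative (Z t, QA (X t) + QB (X t) * Y t + QC (X t) * (Y t)\<^sup>2)) (at t)"
    using dX dY by (intro has_vector_derivative_Pair) (simp_all add: has_real_derivative_iff_has_vector_derivative)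
  then show ?thesis unfolding traj using ZY fun_cong[OF traj, of t] by simp
qed


(* The energy is the distance to the origin in the coordinates (xi, eta), made
   globally continuous by clamping x to [-d, d]; its sublevel sets below m are
   the neighbourhoods of the origin filled by closed orbits. *)
definition clamp :: "real \<Rightarrow> real" where "clamp x = max (-d) (min d x)"

definition energy :: "real \<times> real \<Rightarrow> real" where
  "energy q = norm (coord (clamp (fst q), snd q))"

lemma energy_continuous: "continuous_on UNIV energy"
proof -
  have clamp_in: "clamp x \<in> {-d..d}" for x using d_pos by (auto simp: clamp_def)
  have clamped: "continuous_on UNIV (\<lambda>q. G (clamp (fst q)))"
    if "\<And>x. \<bar>x\<bar> < \<delta> \<Longrightarrow> isCont G x" for G :: "real \<Rightarrow> real"
  proof (rule continuous_on_compose2[of "{-d..d}" G])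
    show "continuous_on {-d..d} G" using that d_less by (intro continuous_at_imp_continuous_on ballI) auto
    show "continuous_on UNIV (\<lambda>q. clamp (fst q))" unfolding clamp_def by (intro continuous_intros)
  qed (use clamp_in in auto)
  show ?thesis unfolding energy_def coord_def
    by (simp, intro continuous_intros clamped isCont_data)
qed

lemma energy_eq: "\<bar>fst q\<bar> \<le> d \<Longrightarrow> energy q = norm (coord q)"
  by (simp add: energy_def clamp_def abs_le_iff)

lemma energy_edge:
  assumes "d \<le> \<bar>fst q\<bar>"
  shows "m \<le> energy q"
proof -
  have "\<bar>clamp (fst q)\<bar> = d" using assms d_pos by (auto simp: clamp_def)
  then have "m \<le> \<bar>xi (clamp (fst q))\<bar>" by (rule m_le_xi)
  also have "\<dots> \<le> energy q"
    using abs_fst_le_norm[of "coord (clamp (fst q), snd q)"] by (simp add: energy_def coord_def)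
  finally show ?thesis .
qed

lemma energy_small: "energy q < m \<Longrightarrow> \<bar>fst q\<bar> < d"
  using energy_edge[of q] by linarith

lemma energy_origin [simp]: "energy (0, 0) = 0"
  using energy_eq[of "(0, 0)"] d_pos by simp

(* The sublevel set {energy < m} is contained in the continuous image of the
   compact rectangle [-d, d] x [-m, m] under the inverse coordinates. *)
lemma energy_sublevel_bounded: "bounded {q. energy q < m}"
proof -
  define recover where "recover = (\<lambda>p. (fst p, (snd p / E (fst p) - PA (fst p)) / PB (fst p)))"
  have "{q. energy q < m} \<subseteq> recover ` ({-d..d} \<times> {-m..m})"
  proof
    fix q assume "q \<in> {q. energy q < m}"
    then have q: "\<bar>fst q\<bar> < d" "norm (coord q) < m" using energy_small[of q] energy_eq[of q] by auto
    then have "E (fst q) \<noteq> 0" "PB (fst q) \<noteq> 0"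
      using d_less E_pos[of "fst q"] PB_nonzero[of "fst q"] by auto
    then have "recover (fst q, snd (coord q)) = q" by (simp add: recover_def coord_def prod_eq_iff)
    moreover have "\<bar>snd (coord q)\<bar> \<le> m" using q(2) abs_snd_le_norm[of "coord q"] by simp
    ultimately show "q \<in> recover ` ({-d..d} \<times> {-m..m})"
      using q(1) by (intro image_eqI[of _ _ "(fst q, snd (coord q))"]) auto
  qed
  moreover have "continuous_on ({-d..d} \<times> {-m..m}) recover"
  proof -
    have first: "continuous_on ({-d..d} \<times> {-m..m}) (\<lambda>p. G (fst p))"
      if "\<And>x. \<bar>x\<bar> < \<delta> \<Longrightarrow> isCont G x" for G :: "real \<Rightarrow> real"
      by (rule continuous_on_compose2[OF _ continuous_on_fst, of "{-d..d}"])
         (use that d_less in \<open>auto intro!: continuous_at_imp_continuous_on\<close>)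
    have "E (fst p) \<noteq> 0" "PB (fst p) \<noteq> 0" if "p \<in> {-d..d} \<times> {-m..m}" for p
    proof -
      have "\<bar>fst p\<bar> < \<delta>" using that d_less by (auto simp: mem_Times_iff abs_less_iff)
      then show "E (fst p) \<noteq> 0" "PB (fst p) \<noteq> 0" using E_pos PB_nonzero by force+
    qed
    then show ?thesis unfolding recover_def
      by (intro continuous_intros first isCont_data) auto
  qed
  then have "compact (recover ` ({-d..d} \<times> {-m..m}))"
    by (intro compact_continuous_image compact_Times compact_Icc)
  ultimately show ?thesis using bounded_subset compact_imp_bounded by blast
qed

definition orbit :: "real \<times> real \<Rightarrow> real \<Rightarrow> real \<times> real" where
  "orbit w0 t = uncoord (rotation t w0)"

lemma orbit_small: "norm w0 < m \<Longrightarrow> \<bar>fst (rotation t w0)\<bar> < m"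
  using abs_fst_le_norm[of "rotation t w0"] by simp

lemma coord_orbit: "norm w0 < m \<Longrightarrow> coord (orbit w0 t) = rotation t w0"
  unfolding orbit_def by (rule coord_uncoord[OF orbit_small])

(* The orbit is the level set {energy = norm w0}, which surrounds the origin. *)
lemma orbit_surrounds_origin:
  assumes w0: "w0 \<noteq> 0" "norm w0 < m"
  shows "surrounds_origin (orbit w0 ` {0..2 * pi})"
proof (rule surrounds_origin_of_level_set[OF energy_continuous])
  show "energy (0, 0) < norm w0" using w0 by simp
  show "{q. energy q = norm w0} \<subseteq> orbit w0 ` {0..2 * pi}"
  proof
    fix q assume "q \<in> {q. energy q = norm w0}"
    then have q: "\<bar>fst q\<bar> < d" "norm (coord q) = norm w0"
      using w0 energy_small[of q] energy_eq[of q] by auto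
    obtain t where t: "t \<in> {0..2 * pi}" "rotation t w0 = coord q"
      using rotation_onto_circle[OF q(2)] by blast
    have "orbit w0 t = q" using t(2) uncoord_coord q(1) by (simp add: orbit_def)
    then show "q \<in> orbit w0 ` {0..2 * pi}" using t(1) by blast
  qed
  show "(0, 0) \<notin> orbit w0 ` {0..2 * pi}"
  proof
    assume "(0, 0) \<in> orbit w0 ` {0..2 * pi}"
    then obtain t where "(0, 0) = orbit w0 t" by (rule imageE)
    then have "coord (0, 0) = coord (orbit w0 t)" by (rule arg_cong)
    then have "rotation t w0 = 0" using coord_orbit[OF w0(2)] by simp
    then have "norm w0 = 0" using norm_rotation[of t w0] by simp
    then show False using w0 by simp
  qed
  show "bounded {q. energy q < norm w0}"
    by (rule bounded_subset[OF energy_sublevel_bounded]) (use w0 in auto)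
qed

(* Every point p of the punctured neighbourhood {energy < m} lies on the orbit
   through coord p, which has minimal period 2 pi and surrounds the origin. *)
theorem isochronous: "isochronous_center system"
  unfolding isochronous_center_def
proof (intro exI[of _ "{q. energy q < m}"] exI[of _ "2 * pi"] conjI ballI)
  show "open {q. energy q < m}" by (rule open_Collect_less[OF energy_continuous continuous_on_const])
  show "(0, 0) \<in> {q. energy q < m}" "0 < 2 * pi" using m_pos by auto
  fix p assume p: "p \<in> {q. energy q < m} - {(0, 0)}"
  define w0 where "w0 = coord p"
  have pd: "\<bar>fst p\<bar> < d" using p energy_small by auto
  have w0_small: "norm w0 < m" using p energy_eq[of p] pd by (auto simp: w0_def)
  have start: "orbit w0 0 = p" using uncoord_coord pd by (simp add: orbit_def w0_def)
  then have w0_nonzero: "w0 \<noteq> 0" using p by (auto simp: orbit_def)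
  show "\<exists>\<phi>. \<phi> 0 = p \<and> (\<forall>t. (\<phi> has_vector_derivative system (\<phi> t)) (at t)) \<and>
      (\<forall>t. \<phi> (t + 2 * pi) = \<phi> t) \<and> (\<forall>t. 0 < t \<and> t < 2 * pi \<longrightarrow> \<phi> t \<noteq> p) \<and>
      surrounds_origin (\<phi> ` {0..2 * pi})"
  proof (intro exI[of _ "orbit w0"] conjI allI impI start orbit_surrounds_origin w0_nonzero w0_small)
    fix t
    show "(orbit w0 has_vector_derivative system (orbit w0 t)) (at t)"
      using uncoord_trajectory[OF rotation_derivative orbit_small[OF w0_small]]
      by (simp add: orbit_def[abs_def])
    show "orbit w0 (t + 2 * pi) = orbit w0 t" by (simp add: orbit_def rotation_periodic)
  next
    fix t assume "0 < t \<and> t < 2 * pi"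
    then have "rotation t w0 \<noteq> w0" using rotation_no_return w0_nonzero by blast
    then show "orbit w0 t \<noteq> p" using coord_orbit[OF w0_small, of t] by (auto simp: w0_def)
  qed
qed

end

(* The compatibility identity of the Urabe reduction says exactly that
   z = p0 + p1 y transforms the polynomial system into x' = z, z' = -g - f z^2. *)
lemma reduction_of_urabe_identity:
  fixes p0 p1 q0 q1 q2 :: "real poly"
  assumes nz: "poly p1 x \<noteq> 0" and identity: "urabe_identity p0 p1 q1 q2 x = 0"
  shows "poly (pderiv p0) x * (poly p0 x + poly p1 x * y)
      + poly (pderiv p1) x * (poly p0 x + poly p1 x * y) * y
      + poly p1 x * (poly q0 x + poly q1 x * y + poly q2 x * y\<^sup>2)
    = - urabe_g p0 p1 q0 q1 q2 x - urabe_f p1 q2 x * (poly p0 x + poly p1 x * y)\<^sup>2"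
proof -
  have q1: "poly q1 x = poly (pderiv p1) x * poly p0 x / poly p1 x - poly (pderiv p0) x
      + 2 * poly q2 x * poly p0 x / poly p1 x"
    using identity by (simp add: urabe_identity_def)
  show ?thesis
    unfolding urabe_g_def urabe_f_def q1 using nz by (simp add: field_simps power2_eq_square)
qed

lemma urabe_linearizing_coordinate:
  fixes p0 p1 q0 q1 q2 :: "real poly"
  assumes \<delta>: "0 < \<delta>" and nz: "\<And>x. \<bar>x\<bar> < \<delta> \<Longrightarrow> poly p1 x \<noteq> 0"
    and p0_zero: "poly p0 0 = 0" and q0_zero: "poly q0 0 = 0"
    and identity: "\<And>x. poly p1 x \<noteq> 0 \<Longrightarrow> urabe_identity p0 p1 q1 q2 x = 0"
    and g_ode: "\<And>x. poly p1 x \<noteq> 0 \<Longrightarrow> (urabe_g p0 p1 q0 q1 q2 has_real_derivative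
                  1 - urabe_g p0 p1 q0 q1 q2 x * urabe_f p1 q2 x) (at x)"
  shows "linearizing_coordinate (poly p0) (poly p1) (poly q0) (poly q1) (poly q2)
    (poly (pderiv p0)) (poly (pderiv p1)) (urabe_f p1 q2) (urabe_g p0 p1 q0 q1 q2)
    (\<lambda>x. exp (sint (urabe_f p1 q2) x)) \<delta>"
proof -
  let ?f = "urabe_f p1 q2" and ?g = "urabe_g p0 p1 q0 q1 q2" and ?F = "sint (urabe_f p1 q2)"
  have "continuous_on {-\<delta><..<\<delta>} ?f"
    unfolding urabe_f_def by (intro continuous_intros) (use nz in auto)
  then have F_deriv: "(?F has_real_derivative ?f x) (at x)" if "\<bar>x\<bar> < \<delta>" for x
    using sint_has_derivative that by blast
  show ?thesis
  proof
    fix x assume x: "\<bar>x\<bar> < \<delta>"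
    show E': "((\<lambda>x. exp (?F x)) has_real_derivative exp (?F x) * ?f x) (at x)"
      by (rule DERIV_chain2[OF DERIV_exp F_deriv[OF x]])
    have "((\<lambda>x. ?g x * exp (?F x)) has_real_derivative
        (1 - ?g x * ?f x) * exp (?F x) + exp (?F x) * ?f x * ?g x) (at x)"
      by (rule DERIV_mult[OF g_ode[OF nz[OF x]] E'])
    then show "((\<lambda>x. ?g x * exp (?F x)) has_real_derivative exp (?F x)) (at x)"
      by (simp add: algebra_simps)
    show "poly (pderiv p0) x * (poly p0 x + poly p1 x * y) + poly (pderiv p1) x * (poly p0 x + poly p1 x * y) * y
        + poly p1 x * (poly q0 x + poly q1 x * y + poly q2 x * y\<^sup>2)
      = - ?g x - ?f x * (poly p0 x + poly p1 x * y)\<^sup>2" for y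
      by (rule reduction_of_urabe_identity[OF nz[OF x] identity[OF nz[OF x]]])
  qed (use \<delta> nz p0_zero q0_zero in \<open>auto simp: urabe_g_def poly_DERIV\<close>)
qed

theorem zero_urabe_criterion:
  fixes p0 p1 q0 q1 q2 :: "real poly"
  defines "V \<equiv> \<lambda>(x, y). (poly p0 x + poly p1 x * y, poly q0 x + poly q1 x * y + poly q2 x * y\<^sup>2)"
  assumes p0_zero: "poly p0 0 = 0" and q0_zero: "poly q0 0 = 0" and p1_nonzero: "poly p1 0 \<noteq> 0"
    and identity: "\<And>x. poly p1 x \<noteq> 0 \<Longrightarrow> urabe_identity p0 p1 q1 q2 x = 0"
    and g_ode: "\<And>x. poly p1 x \<noteq> 0 \<Longrightarrow> (urabe_g p0 p1 q0 q1 q2 has_real_derivative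
                  1 - urabe_g p0 p1 q0 q1 q2 x * urabe_f p1 q2 x) (at x)"
  shows "isochronous_center V \<and> zero_urabe_system V"
proof -
  have "open {x. poly p1 x \<noteq> 0}" by (intro open_Collect_neq continuous_intros)
  then obtain \<delta> where \<delta>: "0 < \<delta>" "ball 0 \<delta> \<subseteq> {x. poly p1 x \<noteq> 0}"
    using p1_nonzero by (auto elim!: openE)
  then have nz: "poly p1 x \<noteq> 0" if "\<bar>x\<bar> < \<delta>" for x using that by auto
  interpret linearizing_coordinate "poly p0" "poly p1" "poly q0" "poly q1" "poly q2"
      "poly (pderiv p0)" "poly (pderiv p1)" "urabe_f p1 q2" "urabe_g p0 p1 q0 q1 q2"
      "\<lambda>x. exp (sint (urabe_f p1 q2) x)" \<delta>
    by (rule urabe_linearizing_coordinate[OF \<delta>(1) nz p0_zero q0_zero identity g_ode])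
  have zero: "urabe_zero p0 p1 q0 q1 q2"
    unfolding urabe_zero_def Let_def
  proof (intro exI[of _ \<delta>] conjI allI impI \<delta>)
    fix x assume x: "\<bar>x\<bar> < \<delta>"
    show "urabe_identity p0 p1 q1 q2 x = 0" using identity nz x by blast
    have "(\<lambda>s. urabe_g p0 p1 q0 q1 q2 s * exp (2 * sint (urabe_f p1 q2) s))
        = (\<lambda>s. xi s * exp (sint (urabe_f p1 q2) s))"
      by (simp only: xi_def mult_2 exp_add mult.assoc)
    then show "(urabe_g p0 p1 q0 q1 q2 x * exp (sint (urabe_f p1 q2) x))\<^sup>2 / 2
        = sint (\<lambda>s. urabe_g p0 p1 q0 q1 q2 s * exp (2 * sint (urabe_f p1 q2) s)) x"
      using xi_square_primitive[OF x] by (simp add: xi_def)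
    show "x \<noteq> 0 \<Longrightarrow> 0 < x * (urabe_g p0 p1 q0 q1 q2 x * exp (sint (urabe_f p1 q2) x))"
      using xi_sign[OF x] by (simp add: xi_def)
  qed
  have "zero_urabe_system V"
    unfolding zero_urabe_system_def V_def
    by (rule exI[of _ p0], rule exI[of _ p1], rule exI[of _ q0], rule exI[of _ q1], rule exI[of _ q2])
      (simp add: zero p0_zero q0_zero p1_nonzero)
  moreover have "isochronous_center V" unfolding V_def by (rule isochronous)
  ultimately show ?thesis by blast
qed

(* The equation g' = 1 - g f for the family (iii), where
   g = (1 - a x - K x^2)(x + (a - b)/2 x^2) and f = (a + b + 4 K x)/(1 - a x - K x^2);
   after clearing denominators it is a polynomial identity which holds precisely
   because K = a^2 - 3/2 a b + 1/2 b^2. *)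
lemma family_urabe_ode:
  fixes a b K x :: real
  assumes K: "K = a^2 - 3/2*a*b + 1/2*b^2" and nz: "1 - a*x - K*x^2 \<noteq> 0"
  shows "((\<lambda>x. (1 - a*x - K*x^2) * (x + (a - b)/2 * x^2)) has_real_derivative
      1 - (1 - a*x - K*x^2) * (x + (a - b)/2 * x^2) * ((a + b + 4*K*x) / (1 - a*x - K*x^2))) (at x)"
proof -
  have "((\<lambda>x. (1 - a*x - K*x^2) * (x + (a - b)/2 * x^2)) has_real_derivative
      (- a - 2*K*x) * (x + (a - b)/2 * x^2) + (1 - a*x - K*x^2) * (1 + (a - b) * x)) (at x)"
    by (auto intro!: derivative_eq_intros simp: field_simps power2_eq_square)
  moreover have "(- a - 2*K*x) * (x + (a - b)/2 * x^2) + (1 - a*x - K*x^2) * (1 + (a - b) * x)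
      = 1 - (1 - a*x - K*x^2) * (x + (a - b)/2 * x^2) * ((a + b + 4*K*x) / (1 - a*x - K*x^2))"
    using nz by (simp add: K field_simps power2_eq_square)
  ultimately show ?thesis by simp
qed

(* The family (iii).  Here p0 = -x^2 p1, so that g = -p1 (q2 x^4 + q1 x^2 + q0)
   and f are the explicit functions of family_urabe_ode. *)
lemma family_isochronous_zero_urabe:
  fixes a b K :: real and V :: "real \<times> real \<Rightarrow> real \<times> real"
  assumes K: "K = a^2 - 3/2*a*b + 1/2*b^2"
    and V: "\<And>x y. V (x, y) =
      (- y + a*x*y + K*x^2*y + x^2 - a*x^3 - K*x^4,
       x + b*y^2 - 2*x*y + (a - b)/2*x^2 + 2*K*x*y^2 + 2*(a - b)*x^2*y + 2*x^3 - 2*K*x^3*y + (b - 2*a)*x^4)"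
  shows "isochronous_center V \<and> zero_urabe_system V"
proof -
  define p0 :: "real poly" where "p0 = [:0, 0, 1, -a, -K:]"
  define p1 :: "real poly" where "p1 = [:-1, a, K:]"
  define q0 :: "real poly" where "q0 = [:0, 1, (a - b)/2, 2, b - 2*a:]"
  define q1 :: "real poly" where "q1 = [:0, -2, 2*(a - b), -2*K:]"
  define q2 :: "real poly" where "q2 = [:b, 2*K:]"
  have V_poly: "V = (\<lambda>(x, y). (poly p0 x + poly p1 x * y, poly q0 x + poly q1 x * y + poly q2 x * y\<^sup>2))"
    by (auto simp: fun_eq_iff V p0_def p1_def q0_def q1_def q2_def algebra_simps
        power2_eq_square power3_eq_cube power4_eq_xxxx)
  have p1: "poly p1 x = - (1 - a*x - K*x^2)" for x
    by (simp add: p1_def algebra_simps power2_eq_square)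
  have p0: "poly p0 x = - (x^2) * poly p1 x" for x
    by (simp add: p0_def p1_def algebra_simps power2_eq_square power3_eq_cube power4_eq_xxxx)
  have g: "urabe_g p0 p1 q0 q1 q2 = (\<lambda>x. (1 - a*x - K*x^2) * (x + (a - b)/2 * x^2))"
  proof
    fix x
    have "urabe_g p0 p1 q0 q1 q2 x = - poly p1 x * (poly q2 x * x^4 + poly q1 x * x^2 + poly q0 x)"
      using p0[of x] by (cases "poly p1 x = 0")
        (auto simp: urabe_g_def field_simps power2_eq_square power4_eq_xxxx)
    also have "\<dots> = (1 - a*x - K*x^2) * (x + (a - b)/2 * x^2)"
      unfolding p1 by (simp add: q0_def q1_def q2_def field_simps power2_eq_square power3_eq_cube
          power4_eq_xxxx)
    finally show "urabe_g p0 p1 q0 q1 q2 x = (1 - a*x - K*x^2) * (x + (a - b)/2 * x^2)" .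
  qed
  have f: "urabe_f p1 q2 x = (a + b + 4*K*x) / (1 - a*x - K*x^2)" for x
  proof -
    have num: "poly q2 x + poly (pderiv p1) x = a + b + 4*K*x"
      by (simp add: q2_def p1_def pderiv_pCons algebra_simps)
    show ?thesis unfolding urabe_f_def p1 by (simp only: num minus_divide_divide)
  qed
  show ?thesis unfolding V_poly
  proof (rule zero_urabe_criterion)
    show "poly p0 0 = 0" "poly q0 0 = 0" "poly p1 0 \<noteq> 0" by (simp_all add: p0_def q0_def p1_def)
    fix x assume nz: "poly p1 x \<noteq> 0"
    show "urabe_identity p0 p1 q1 q2 x = 0"
      using nz unfolding urabe_identity_def
      by (simp add: p0_def p1_def q1_def q2_def field_simps pderiv_pCons)
    show "(urabe_g p0 p1 q0 q1 q2 has_real_derivative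
        1 - urabe_g p0 p1 q0 q1 q2 x * urabe_f p1 q2 x) (at x)"
      unfolding g f using family_urabe_ode[OF K] nz p1 by simp
  qed
qed

(* Systems (i) and (ii) are the members b = 3a (K = a^2) and b = 4a (K = 3a^2)
   of the family (iii). *)
theorem theorem4p2:
  fixes a b :: real
  shows
   "(let V = (\<lambda>(x::real, y::real).
        (- y + a*x*y + a^2*x^2*y + x^2 - a*x^3 - a^2*x^4,
         x + 3*a*y^2 - 2*x*y - a*x^2 + 2*a^2*x*y^2 - 4*a*x^2*y + 2*x^3 - 2*a^2*x^3*y + a*x^4))
     in isochronous_center V \<and> zero_urabe_system V)
  \<and> (let V = (\<lambda>(x::real, y::real).
        (- y + a*x*y + 3*a^2*x^2*y + x^2 - a*x^3 - 3*a^2*x^4,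
         x + 4*a*y^2 - 2*x*y - 3/2*a*x^2 + 6*a^2*x*y^2 - 6*a*x^2*y + 2*x^3 - 6*a^2*x^3*y + 2*a*x^4))
     in isochronous_center V \<and> zero_urabe_system V)
  \<and> (let K = a^2 - 3/2*a*b + 1/2*b^2;
         V = (\<lambda>(x::real, y::real).
        (- y + a*x*y + K*x^2*y + x^2 - a*x^3 - K*x^4,
         x + b*y^2 - 2*x*y + (a - b)/2*x^2 + 2*K*x*y^2 + 2*(a - b)*x^2*y + 2*x^3 - 2*K*x^3*y + (b - 2*a)*x^4))
     in isochronous_center V \<and> zero_urabe_system V)"
  unfolding Let_def
proof (intro conjI[OF _ conjI], goal_cases)
  case 1
  show ?case by (rule family_isochronous_zero_urabe[where a = a and b = "3*a" and K = "a^2"])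
    (simp_all add: power2_eq_square field_simps)
next
  case 2
  show ?case by (rule family_isochronous_zero_urabe[where a = a and b = "4*a" and K = "3*a^2"])
    (simp_all add: power2_eq_square field_simps)
next
  case 3
  show ?case by (rule family_isochronous_zero_urabe[where a = a and b = b and K = "a^2 - 3/2*a*b + 1/2*b^2"]) simp_all
qed

end
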